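(* Let $n\geq1$, $w=e^{2\pi i/n}$ and $F=(w^{ij}/\sqrt n)_{i,j=0}^{n-1}$. Let $\Phi$ be the map on $n\times n$ circulant complex matrices defined by $\Phi\big((x_{j-i})_{i,j}\big)=\big((Fx)_{j-i}\big)_{i,j}$, where $x=(x_0,\ldots,x_{n-1})^t$ is the first row. Then $\Phi$ restricts to a bijection from $C^{circ}_n(\infty)$ onto $C^{circ}_n(\infty)$, and this bijection maps $C^{circ}_n(2)$ onto $C^{circ,sa}_n(\infty)$. More precisely, for a circulant $H$: $H\in\sqrt n\,U(n)$ iff all entries of $\Phi(H)$ have modulus one, and $H\in\sqrt n\,O(n)$ (real orthogonal times $\sqrt n$) iff $\Phi(H)$ is self-adjoint with all entries of modulus one.
   Context: A complex Hadamard matrix of order $n$ is a matrix $H$ with $|H_{ij}|=1$ and $H/\sqrt n$ unitary. $C^{circ}_n(\infty)$ is the set of $n\times n$ circulant complex Hadamard matrices ($H_{ij}$ depends only on $j-i$ mod $n$); $C^{circ}_n(2)$ is the subset of those with entries in $\{\pm1\}$; $C^{circ,sa}_n(\infty)$ is the subset of self-adjoint (Hermitian) ones. *)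

theory Defs
  imports "HOL-Analysis.Analysis" "Jordan_Normal_Form.Schur_Decomposition"
begin

definition circulant_mat :: "nat \<Rightarrow> complex mat \<Rightarrow> bool" where
  "circulant_mat n H \<longleftrightarrow> H \<in> carrier_mat n n \<and>
     (\<forall>i<n. \<forall>j<n. H $$ (i, j) = H $$ (0, (j + n - i) mod n))"

definition circ_of :: "nat \<Rightarrow> (nat \<Rightarrow> complex) \<Rightarrow> complex mat" where
  "circ_of n x = mat n n (\<lambda>(i, j). x ((j + n - i) mod n))"

definition fourier_mat :: "nat \<Rightarrow> complex mat" where
  "fourier_mat n = mat n n (\<lambda>(i, j).
     exp (2 * of_real pi * \<i> / of_nat n) ^ (i * j) / complex_of_real (sqrt (real n)))"

definition Phi :: "nat \<Rightarrow> complex mat \<Rightarrow> complex mat" where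
  "Phi n H = circ_of n (\<lambda>k. (fourier_mat n *\<^sub>v row H 0) $ k)"

definition unimodular_entries :: "nat \<Rightarrow> complex mat \<Rightarrow> bool" where
  "unimodular_entries n H \<longleftrightarrow> (\<forall>i<n. \<forall>j<n. cmod (H $$ (i, j)) = 1)"

definition in_sqrt_n_U :: "nat \<Rightarrow> complex mat \<Rightarrow> bool" where
  "in_sqrt_n_U n H \<longleftrightarrow> H \<in> carrier_mat n n \<and>
     H * mat_adjoint H = of_nat n \<cdot>\<^sub>m 1\<^sub>m n \<and>
     mat_adjoint H * H = of_nat n \<cdot>\<^sub>m 1\<^sub>m n"

definition in_sqrt_n_O :: "nat \<Rightarrow> complex mat \<Rightarrow> bool" where
  "in_sqrt_n_O n H \<longleftrightarrow> H \<in> carrier_mat n n \<and>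
     (\<forall>i<n. \<forall>j<n. H $$ (i, j) \<in> \<real>) \<and>
     H * transpose_mat H = of_nat n \<cdot>\<^sub>m 1\<^sub>m n \<and>
     transpose_mat H * H = of_nat n \<cdot>\<^sub>m 1\<^sub>m n"

definition complex_hadamard :: "nat \<Rightarrow> complex mat \<Rightarrow> bool" where
  "complex_hadamard n H \<longleftrightarrow> H \<in> carrier_mat n n \<and> unimodular_entries n H \<and> in_sqrt_n_U n H"

definition self_adjoint_mat :: "complex mat \<Rightarrow> bool" where
  "self_adjoint_mat H \<longleftrightarrow> mat_adjoint H = H"

definition C_circ_inf :: "nat \<Rightarrow> complex mat set" where
  "C_circ_inf n = {H. circulant_mat n H \<and> complex_hadamard n H}"

definition C_circ_2 :: "nat \<Rightarrow> complex mat set" where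
  "C_circ_2 n = {H \<in> C_circ_inf n. \<forall>i<n. \<forall>j<n. H $$ (i, j) \<in> {1, -1}}"

definition C_circ_sa_inf :: "nat \<Rightarrow> complex mat set" where
  "C_circ_sa_inf n = {H \<in> C_circ_inf n. self_adjoint_mat H}"

end

theory Submission
  imports Defs "HOL-Number_Theory.Cong"
begin

text \<open>The Fourier matrix \<open>F\<close> is unitary and diagonalises every circulant matrix:
  \<open>circ x * F = F * diag \<lambda>\<close> with \<open>\<lambda>\<^sub>k = sqrt n * (F x)\<^sub>k\<close>. Hence \<open>circ x / sqrt n\<close> is unitary iff
  \<open>|\<lambda>\<^sub>k|\<^sup>2 = n\<close> for all \<open>k\<close>, i.e. iff \<open>\<Phi>(circ x) = circ (F x)\<close> has unimodular entries.
  Since \<open>F\<^sup>2\<close> reverses indices (\<open>k \<mapsto> -k\<close>), \<open>\<Phi>\<^sup>4\<close> is the identity on circulants, so \<open>\<Phi>\<close> permutes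
  \<open>C_circ_inf n\<close>. Finally \<open>cnj ((F x)\<^sub>k) = (F (cnj x))\<^sub>-\<^sub>k\<close>, so \<open>\<Phi>(circ x)\<close> is self-adjoint iff
  \<open>x\<close> is real, and a real unimodular vector has entries \<open>\<plusminus>1\<close>.\<close>

section \<open>Roots of unity\<close>

definition unit_root :: "nat \<Rightarrow> complex" where
  "unit_root n = exp (2 * of_real pi * \<i> / of_nat n)"

lemma unit_root_power: "unit_root n ^ a = exp (2 * of_real pi * \<i> * of_nat a / of_nat n)"
  unfolding unit_root_def exp_of_nat_mult[symmetric] by (simp add: mult_ac)

lemma unit_root_nonzero [simp]: "unit_root n \<noteq> 0"
  unfolding unit_root_def by simp

lemma norm_unit_root_power [simp]: "cmod (unit_root n ^ a) = 1"
proof -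
  have "unit_root n ^ a = exp (\<i> * complex_of_real (2 * pi * a / n))"
    unfolding unit_root_power by (simp add: mult_ac)
  then show ?thesis by (simp only: norm_exp_i_times)
qed

lemma cnj_unit_root_power_eq_inverse: "cnj (unit_root n ^ a) = inverse (unit_root n ^ a)"
  using complex_norm_square[of "unit_root n ^ a"] by (intro inverse_unique[symmetric]) simp

lemma sum_powers_root_of_unity:
  fixes z :: complex
  assumes "z ^ n = 1"
  shows "(\<Sum>j<n. z ^ j) = (if z = 1 then of_nat n else 0)"
  using assms by (simp add: sum_gp_strict)

context
  fixes n :: nat
  assumes n_pos: "0 < n"
begin

lemma unit_root_power_eq_iff: "unit_root n ^ a = unit_root n ^ b \<longleftrightarrow> a mod n = b mod n"
  using complex_root_unity_eq[of n a b] n_pos by (simp add: unit_root_power)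

lemma unit_root_power_eq_1_iff: "unit_root n ^ a = 1 \<longleftrightarrow> n dvd a"
  using complex_root_unity_eq_1[of n a] n_pos by (simp add: unit_root_power)

lemma cnj_unit_root_power:
  assumes "n dvd a + b"
  shows "cnj (unit_root n ^ a) = unit_root n ^ b"
  unfolding cnj_unit_root_power_eq_inverse
  using assms by (intro inverse_unique) (simp add: power_add[symmetric] unit_root_power_eq_1_iff)

lemma sum_unit_root_powers: "(\<Sum>j<n. unit_root n ^ (j * a)) = (if n dvd a then of_nat n else 0)"
proof -
  have "(unit_root n ^ a) ^ n = 1"
    by (simp add: power_mult[symmetric] unit_root_power_eq_1_iff)
  then have "(\<Sum>j<n. (unit_root n ^ a) ^ j) = (if n dvd a then of_nat n else 0)"
    by (simp add: sum_powers_root_of_unity unit_root_power_eq_1_iff)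
  then show ?thesis
    by (simp add: power_mult[symmetric] mult.commute)
qed

lemma sum_unit_root_orthogonality:
  "(\<Sum>j<n. unit_root n ^ (i * j) * cnj (unit_root n ^ (l * j)))
    = (if i mod n = l mod n then of_nat n else 0)"
proof -
  define z where "z = unit_root n ^ i * cnj (unit_root n ^ l)"
  have "unit_root n ^ (n * a) = 1" for a
    by (simp add: unit_root_power_eq_1_iff)
  then have "z ^ n = 1"
    unfolding z_def cnj_unit_root_power_eq_inverse
    by (simp add: power_mult_distrib power_mult[symmetric] mult.commute[of _ n] power_inverse)
  moreover have "z = 1 \<longleftrightarrow> unit_root n ^ i = unit_root n ^ l"
    unfolding z_def cnj_unit_root_power_eq_inverse by (simp add: field_simps)
  moreover have "unit_root n ^ (i * j) * cnj (unit_root n ^ (l * j)) = z ^ j" for j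
    unfolding z_def
    by (simp only: power_mult_distrib power_mult[symmetric] mult.commute[of j] complex_cnj_power)
  ultimately show ?thesis
    by (simp add: sum_powers_root_of_unity unit_root_power_eq_iff)
qed

end

section \<open>The discrete Fourier transform\<close>

text \<open>On indices in \<open>{0..<n}\<close>, \<open>(n - k) mod n\<close> represents \<open>-k\<close> and \<open>(j + n - i) mod n\<close>
  represents \<open>j - i\<close>.\<close>

lemma minus_mod_minus_mod: "(k :: nat) < n \<Longrightarrow> (n - (n - k) mod n) mod n = k"
  by (cases "k = 0") auto

lemma all_minus_mod_iff: "0 < (n :: nat) \<Longrightarrow> (\<forall>k<n. P ((n - k) mod n)) \<longleftrightarrow> (\<forall>k<n. P k)"
  by (metis minus_mod_minus_mod mod_less_divisor)

lemma dvd_add_iff_eq_minus_mod: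
  assumes "(k :: nat) < n" "p < n"
  shows "n dvd k + p \<longleftrightarrow> p = (n - k) mod n"
proof (cases "k = 0")
  case False
  with assms have "n dvd k + p \<longleftrightarrow> k + p = n"
    by (auto simp: dvd_eq_mod_eq_0 mod_if)
  with False assms show ?thesis by auto
qed (use assms in \<open>auto dest: dvd_imp_le\<close>)

lemma sum_lessThan_shift_mod:
  assumes "0 < (n :: nat)"
  shows "(\<Sum>j<n. f ((j + c) mod n)) = (\<Sum>j<n. f j)"
proof -
  have inj: "inj_on (\<lambda>j. (j + c) mod n) {..<n}"
  proof (rule inj_onI)
    fix a b assume "a \<in> {..<n}" "b \<in> {..<n}" "(a + c) mod n = (b + c) mod n"
    then show "a = b" by (metis cong_add_rcancel_nat cong_def lessThan_iff mod_less)
  qed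
  then have "(\<lambda>j. (j + c) mod n) ` {..<n} = {..<n}"
    using assms by (intro endo_inj_surj) auto
  then show ?thesis using sum.reindex[OF inj, of f] by simp
qed

text \<open>\<open>dft n x\<close> is the vector \<open>F x\<close> of the paper, and \<open>circ_eigenvalue n x k = sqrt n * (F x)\<^sub>k\<close> is the
  eigenvalue of \<open>circ_of n x\<close> on the \<open>k\<close>-th column of \<open>F\<close>.\<close>

definition circ_eigenvalue :: "nat \<Rightarrow> (nat \<Rightarrow> complex) \<Rightarrow> nat \<Rightarrow> complex" where
  "circ_eigenvalue n x k = (\<Sum>m<n. unit_root n ^ (k * m) * x m)"

definition dft :: "nat \<Rightarrow> (nat \<Rightarrow> complex) \<Rightarrow> nat \<Rightarrow> complex" where
  "dft n x k = circ_eigenvalue n x k / complex_of_real (sqrt (real n))"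

lemma of_real_sqrt_mult_self:
  "complex_of_real (sqrt (real n)) * complex_of_real (sqrt (real n)) = of_nat n"
  by (simp flip: of_real_mult)

lemma dft_cong: "(\<And>m. m < n \<Longrightarrow> x m = y m) \<Longrightarrow> dft n x k = dft n y k"
  unfolding dft_def circ_eigenvalue_def by simp

lemma mult_cnj_eq_of_nat_iff:
  assumes "0 < n"
  shows "z * cnj z = of_nat n \<longleftrightarrow> cmod (z / complex_of_real (sqrt (real n))) = 1"
proof -
  have "z * cnj z = of_nat n \<longleftrightarrow> complex_of_real ((cmod z)\<^sup>2) = complex_of_real (real n)"
    by (simp only: complex_norm_square[symmetric] of_real_of_nat_eq)
  also have "\<dots> \<longleftrightarrow> (cmod z)\<^sup>2 = real n"
    by (rule of_real_eq_iff)
  also have "\<dots> \<longleftrightarrow> cmod z = sqrt (real n)"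
    using real_sqrt_unique[of "cmod z" "real n"] by auto
  also have "\<dots> \<longleftrightarrow> cmod (z / complex_of_real (sqrt (real n))) = 1"
    using assms by (auto simp: norm_divide)
  finally show ?thesis .
qed

context
  fixes n :: nat
  assumes n_pos: "0 < n"
begin

lemma cnj_dft:
  assumes "k < n"
  shows "cnj (dft n x k) = dft n (\<lambda>m. cnj (x m)) ((n - k) mod n)"
proof -
  have "n dvd k + (n - k) mod n" using assms by (cases "k = 0") auto
  then have "cnj (unit_root n ^ (k * m)) = unit_root n ^ ((n - k) mod n * m)" for m
    by (intro cnj_unit_root_power[OF n_pos]) (simp add: add_mult_distrib[symmetric])
  then show ?thesis by (simp add: dft_def circ_eigenvalue_def)
qed

lemma dft_dft:
  assumes k: "k < n"
  shows "dft n (dft n x) k = x ((n - k) mod n)"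
proof -
  have "circ_eigenvalue n (circ_eigenvalue n x) k = (\<Sum>m<n. \<Sum>p<n. x p * unit_root n ^ (m * (k + p)))"
    unfolding circ_eigenvalue_def by (simp add: sum_distrib_left power_add[symmetric] algebra_simps)
  also have "\<dots> = (\<Sum>p<n. x p * (\<Sum>m<n. unit_root n ^ (m * (k + p))))"
    by (subst sum.swap) (simp add: sum_distrib_left)
  also have "\<dots> = (\<Sum>p<n. if p = (n - k) mod n then of_nat n * x p else 0)"
    using k by (intro sum.cong refl) (simp add: sum_unit_root_powers[OF n_pos] dvd_add_iff_eq_minus_mod)
  also have "\<dots> = of_nat n * x ((n - k) mod n)"
    using n_pos by simp
  finally have "circ_eigenvalue n (circ_eigenvalue n x) k = of_nat n * x ((n - k) mod n)" .
  moreover have "dft n (dft n x) k = circ_eigenvalue n (circ_eigenvalue n x) k / of_nat n"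
    by (simp add: dft_def circ_eigenvalue_def sum_divide_distrib sum_distrib_left of_real_sqrt_mult_self)
  ultimately show ?thesis
    using n_pos by simp
qed

lemma dft_eq_iff: "(\<forall>k<n. dft n x k = dft n y k) \<longleftrightarrow> (\<forall>m<n. x m = y m)"
proof
  assume eq: "\<forall>k<n. dft n x k = dft n y k"
  show "\<forall>m<n. x m = y m"
  proof (intro allI impI)
    fix m assume m: "m < n"
    have "dft n (dft n x) ((n - m) mod n) = dft n (dft n y) ((n - m) mod n)"
      by (rule dft_cong) (use eq in simp)
    then show "x m = y m"
      using n_pos m by (simp add: dft_dft minus_mod_minus_mod)
  qed
qed (auto intro: dft_cong)

lemma dft_hermitian_iff_real:
  "(\<forall>k<n. cnj (dft n x k) = dft n x ((n - k) mod n)) \<longleftrightarrow> (\<forall>m<n. x m \<in> \<real>)"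
proof -
  have "(\<forall>k<n. cnj (dft n x k) = dft n x ((n - k) mod n))
      \<longleftrightarrow> (\<forall>k<n. dft n (\<lambda>m. cnj (x m)) ((n - k) mod n) = dft n x ((n - k) mod n))"
    by (simp add: cnj_dft)
  also have "\<dots> \<longleftrightarrow> (\<forall>k<n. dft n (\<lambda>m. cnj (x m)) k = dft n x k)"
    by (rule all_minus_mod_iff[OF n_pos])
  also have "\<dots> \<longleftrightarrow> (\<forall>m<n. x m \<in> \<real>)"
    by (simp add: dft_eq_iff Reals_cnj_iff)
  finally show ?thesis .
qed

end

lemma mat_adjoint_carrier: "A \<in> carrier_mat nr nc \<Longrightarrow> mat_adjoint (A :: complex mat) \<in> carrier_mat nc nr"
  unfolding mat_adjoint_def by auto

lemma dim_mat_adjoint [simp]: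
  "dim_row (mat_adjoint (A :: complex mat)) = dim_col A" "dim_col (mat_adjoint A) = dim_row A"
  unfolding mat_adjoint_def by simp_all

lemma mat_adjoint_index:
  "A \<in> carrier_mat nr nc \<Longrightarrow> i < nc \<Longrightarrow> j < nr \<Longrightarrow> mat_adjoint (A :: complex mat) $$ (i, j) = cnj (A $$ (j, i))"
  unfolding mat_adjoint_def by (simp add: mat_of_rows_index)

lemma mat_adjoint_mult:
  assumes A: "(A :: complex mat) \<in> carrier_mat n m" and B: "B \<in> carrier_mat m k"
  shows "mat_adjoint (A * B) = mat_adjoint B * mat_adjoint A"
proof (rule eq_matI)
  have AB: "A * B \<in> carrier_mat n k" using A B by simp
  show "dim_row (mat_adjoint (A * B)) = dim_row (mat_adjoint B * mat_adjoint A)"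
    and "dim_col (mat_adjoint (A * B)) = dim_col (mat_adjoint B * mat_adjoint A)"
    using mat_adjoint_carrier[OF AB] mat_adjoint_carrier[OF A] mat_adjoint_carrier[OF B] by simp_all
  fix i j assume "i < dim_row (mat_adjoint B * mat_adjoint A)" "j < dim_col (mat_adjoint B * mat_adjoint A)"
  then have i: "i < k" and j: "j < n" using mat_adjoint_carrier[OF B] mat_adjoint_carrier[OF A] by auto
  have "mat_adjoint (A * B) $$ (i, j) = (\<Sum>l\<in>{0..<m}. cnj (A $$ (j, l)) * cnj (B $$ (l, i)))"
    using A B i j by (simp add: mat_adjoint_index[OF AB] scalar_prod_def)
  also have "\<dots> = (mat_adjoint B * mat_adjoint A) $$ (i, j)"
    using A B i j mat_adjoint_carrier[OF A] mat_adjoint_carrier[OF B]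
    by (simp add: scalar_prod_def mat_adjoint_index[OF A] mat_adjoint_index[OF B] mult.commute)
  finally show "mat_adjoint (A * B) $$ (i, j) = (mat_adjoint B * mat_adjoint A) $$ (i, j)" .
qed

lemma mat_adjoint_mat_adjoint:
  assumes A: "(A :: complex mat) \<in> carrier_mat nr nc"
  shows "mat_adjoint (mat_adjoint A) = A"
  using A mat_adjoint_carrier[OF A] mat_adjoint_carrier[OF mat_adjoint_carrier[OF A]]
  by (intro eq_matI) (auto simp: mat_adjoint_index[OF mat_adjoint_carrier[OF A]] mat_adjoint_index[OF A])

definition diag_of :: "nat \<Rightarrow> (nat \<Rightarrow> complex) \<Rightarrow> complex mat" where
  "diag_of n d = mat n n (\<lambda>(i, j). if i = j then d i else 0)"

lemma diag_of_carrier: "diag_of n d \<in> carrier_mat n n"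
  unfolding diag_of_def by simp

lemma dim_diag_of [simp]: "dim_row (diag_of n d) = n" "dim_col (diag_of n d) = n"
  unfolding diag_of_def by simp_all

lemma diag_of_index: "i < n \<Longrightarrow> j < n \<Longrightarrow> diag_of n d $$ (i, j) = (if i = j then d i else 0)"
  unfolding diag_of_def by simp

lemma diag_of_mult_diag_of: "diag_of n d * diag_of n e = diag_of n (\<lambda>i. d i * e i)"
  by (rule eq_matI) (auto simp: diag_of_def scalar_prod_def if_distrib cong: if_cong)

lemma mat_adjoint_diag_of: "mat_adjoint (diag_of n d) = diag_of n (\<lambda>i. cnj (d i))"
  using mat_adjoint_carrier[OF diag_of_carrier, of n d] diag_of_carrier[of n]
  by (intro eq_matI) (auto simp: mat_adjoint_index[OF diag_of_carrier] diag_of_index)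

lemma diag_of_eq_smult_one_iff: "diag_of n d = c \<cdot>\<^sub>m 1\<^sub>m n \<longleftrightarrow> (\<forall>i<n. d i = c)"
proof
  assume eq: "diag_of n d = c \<cdot>\<^sub>m 1\<^sub>m n"
  show "\<forall>i<n. d i = c"
  proof (intro allI impI)
    fix i assume "i < n"
    then show "d i = c" using arg_cong[OF eq, of "\<lambda>M. M $$ (i, i)"] by (simp add: diag_of_index)
  qed
qed (intro eq_matI, auto simp: diag_of_index)

lemma unitary_conj_mult:
  fixes F X Y :: "complex mat"
  assumes F: "F \<in> carrier_mat n n" and X: "X \<in> carrier_mat n n" and Y: "Y \<in> carrier_mat n n"
    and FaF: "mat_adjoint F * F = 1\<^sub>m n"
  shows "F * X * mat_adjoint F * (F * Y * mat_adjoint F) = F * (X * Y) * mat_adjoint F"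
proof -
  have Fa: "mat_adjoint F \<in> carrier_mat n n" using mat_adjoint_carrier[OF F] .
  have "F * X * mat_adjoint F * (F * Y * mat_adjoint F) = F * X * (mat_adjoint F * F) * Y * mat_adjoint F"
    using F Fa X Y by (simp add: assoc_mult_mat[of _ n n _ n _ n])
  also have "\<dots> = F * (X * Y) * mat_adjoint F"
    using F Fa X Y by (simp add: FaF assoc_mult_mat[of _ n n _ n _ n])
  finally show ?thesis .
qed

lemma unitary_conj_eq_smult_one_iff:
  fixes F M :: "complex mat"
  assumes F: "F \<in> carrier_mat n n" and M: "M \<in> carrier_mat n n"
    and FFa: "F * mat_adjoint F = 1\<^sub>m n" and FaF: "mat_adjoint F * F = 1\<^sub>m n"
  shows "F * M * mat_adjoint F = c \<cdot>\<^sub>m 1\<^sub>m n \<longleftrightarrow> M = c \<cdot>\<^sub>m 1\<^sub>m n"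
proof -
  have Fa: "mat_adjoint F \<in> carrier_mat n n" using mat_adjoint_carrier[OF F] .
  have smult: "A * (c \<cdot>\<^sub>m 1\<^sub>m n) * B = c \<cdot>\<^sub>m (A * B)"
    if "A \<in> carrier_mat n n" "B \<in> carrier_mat n n" for A B :: "complex mat"
    using mult_smult_distrib[OF that(1) one_carrier_mat, of c] mult_smult_assoc_mat[OF that, of c] that
    by simp
  have "M = mat_adjoint F * (F * M * mat_adjoint F) * F"
  proof -
    have "M = (mat_adjoint F * F) * M * (mat_adjoint F * F)"
      using M by (simp add: FaF)
    then show ?thesis
      using F Fa M by (simp add: assoc_mult_mat[of _ n n _ n _ n])
  qed
  then show ?thesis
    by (auto simp: smult[OF Fa F] smult[OF F Fa] FaF FFa)
qed

lemma scaled_unitary_iff_eigenvalues: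
  assumes F: "F \<in> carrier_mat n n" and H: "H \<in> carrier_mat n n"
    and FFa: "F * mat_adjoint F = 1\<^sub>m n" and FaF: "mat_adjoint F * F = 1\<^sub>m n"
    and HF: "H * F = F * diag_of n d"
  shows "(H * mat_adjoint H = c \<cdot>\<^sub>m 1\<^sub>m n \<and> mat_adjoint H * H = c \<cdot>\<^sub>m 1\<^sub>m n)
    \<longleftrightarrow> (\<forall>k<n. d k * cnj (d k) = c)"
proof -
  define D where "D = diag_of n d"
  have D: "D \<in> carrier_mat n n" and Da: "mat_adjoint D \<in> carrier_mat n n"
    unfolding D_def using diag_of_carrier mat_adjoint_carrier by blast+
  have Fa: "mat_adjoint F \<in> carrier_mat n n" using mat_adjoint_carrier[OF F] .
  have H_eq: "H = F * D * mat_adjoint F"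
  proof -
    have "H = H * (F * mat_adjoint F)" using H by (simp add: FFa)
    also have "\<dots> = F * D * mat_adjoint F"
      using H F Fa HF by (simp add: D_def assoc_mult_mat[of _ n n _ n _ n, symmetric])
    finally show ?thesis .
  qed
  have Ha_eq: "mat_adjoint H = F * mat_adjoint D * mat_adjoint F"
    unfolding H_eq using F D Fa
    by (simp add: mat_adjoint_mult[of _ n n _ n] mat_adjoint_mat_adjoint assoc_mult_mat[of _ n n _ n _ n])
  have "D * mat_adjoint D = diag_of n (\<lambda>k. d k * cnj (d k))"
    and "mat_adjoint D * D = diag_of n (\<lambda>k. d k * cnj (d k))"
    unfolding D_def mat_adjoint_diag_of diag_of_mult_diag_of by (simp_all add: mult.commute)
  then have "H * mat_adjoint H = F * diag_of n (\<lambda>k. d k * cnj (d k)) * mat_adjoint F"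
    and "mat_adjoint H * H = F * diag_of n (\<lambda>k. d k * cnj (d k)) * mat_adjoint F"
    unfolding Ha_eq by (subst H_eq; simp add: unitary_conj_mult[OF F _ _ FaF] D Da)+
  then show ?thesis
    by (simp add: unitary_conj_eq_smult_one_iff[OF F diag_of_carrier FFa FaF] diag_of_eq_smult_one_iff)
qed

section \<open>The Fourier matrix and circulant matrices\<close>

lemma fourier_mat_carrier: "fourier_mat n \<in> carrier_mat n n"
  unfolding fourier_mat_def by simp

lemma dim_fourier_mat [simp]: "dim_row (fourier_mat n) = n" "dim_col (fourier_mat n) = n"
  unfolding fourier_mat_def by simp_all

lemma fourier_mat_index:
  "i < n \<Longrightarrow> j < n \<Longrightarrow> fourier_mat n $$ (i, j) = unit_root n ^ (i * j) / complex_of_real (sqrt (real n))"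
  unfolding fourier_mat_def unit_root_def by simp

lemma fourier_mat_mult_adjoint:
  assumes n_pos: "0 < n"
  shows "fourier_mat n * mat_adjoint (fourier_mat n) = 1\<^sub>m n"
proof (rule eq_matI)
  fix i l assume "i < dim_row (1\<^sub>m n)" "l < dim_col (1\<^sub>m n)"
  then have i: "i < n" and l: "l < n" by auto
  have "(fourier_mat n * mat_adjoint (fourier_mat n)) $$ (i, l)
      = (\<Sum>j<n. unit_root n ^ (i * j) * cnj (unit_root n ^ (l * j))) / of_nat n"
    using i l
    by (simp add: scalar_prod_def mat_adjoint_index[OF fourier_mat_carrier] fourier_mat_index
        sum_divide_distrib atLeast0LessThan of_real_sqrt_mult_self del: complex_cnj_power)
  also have "\<dots> = (if i mod n = l mod n then of_nat n else 0) / of_nat n"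
    by (simp only: sum_unit_root_orthogonality[OF n_pos])
  also have "\<dots> = 1\<^sub>m n $$ (i, l)"
    using i l n_pos by auto
  finally show "(fourier_mat n * mat_adjoint (fourier_mat n)) $$ (i, l) = 1\<^sub>m n $$ (i, l)" .
qed simp_all

lemma fourier_mat_adjoint_mult: "0 < n \<Longrightarrow> mat_adjoint (fourier_mat n) * fourier_mat n = 1\<^sub>m n"
  by (rule mat_mult_left_right_inverse[OF fourier_mat_carrier mat_adjoint_carrier[OF fourier_mat_carrier]
      fourier_mat_mult_adjoint])

lemma circ_of_carrier: "circ_of n x \<in> carrier_mat n n"
  unfolding circ_of_def by simp

lemma dim_circ_of [simp]: "dim_row (circ_of n x) = n" "dim_col (circ_of n x) = n"
  unfolding circ_of_def by simp_all

lemma circ_of_index: "i < n \<Longrightarrow> j < n \<Longrightarrow> circ_of n x $$ (i, j) = x ((j + n - i) mod n)"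
  unfolding circ_of_def by simp

lemma circ_of_cong: "(\<And>k. k < n \<Longrightarrow> x k = y k) \<Longrightarrow> circ_of n x = circ_of n y"
  unfolding circ_of_def by (rule eq_matI) auto

lemma circulant_mat_eq_circ_of_row:
  assumes "circulant_mat n H"
  shows "H = circ_of n (\<lambda>m. H $$ (0, m))"
proof -
  have H: "H \<in> carrier_mat n n"
    and row: "\<And>i j. i < n \<Longrightarrow> j < n \<Longrightarrow> H $$ (i, j) = H $$ (0, (j + n - i) mod n)"
    using assms unfolding circulant_mat_def by blast+
  show ?thesis
    using H by (intro eq_matI) (auto simp: circ_of_index intro: row)
qed

lemma all_entries_circ_of_iff:
  "0 < n \<Longrightarrow> (\<forall>i<n. \<forall>j<n. P (circ_of n x $$ (i, j))) \<longleftrightarrow> (\<forall>m<n. P (x m))"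
  by (fastforce simp: circ_of_index)

lemma sum_circ_row_mult_unit_root_power:
  assumes n_pos: "0 < n" and i: "i < n"
  shows "(\<Sum>j<n. x ((j + n - i) mod n) * unit_root n ^ (j * k)) = unit_root n ^ (i * k) * circ_eigenvalue n x k"
proof -
  have "(\<Sum>j<n. x ((j + n - i) mod n) * unit_root n ^ (j * k))
      = (\<Sum>m<n. x (((m + i) mod n + n - i) mod n) * unit_root n ^ ((m + i) mod n * k))"
    using n_pos by (rule sum_lessThan_shift_mod[symmetric])
  also have "\<dots> = (\<Sum>m<n. unit_root n ^ (i * k) * (unit_root n ^ (k * m) * x m))"
  proof (rule sum.cong[OF refl])
    fix m assume "m \<in> {..<n}"
    then have "((m + i) mod n + n - i) mod n = m"
      using i by (cases "m + i < n") (simp add: mod_if; arith)+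
    moreover have "unit_root n ^ ((m + i) mod n * k) = unit_root n ^ ((m + i) * k)"
      by (simp add: unit_root_power_eq_iff[OF n_pos] mod_mult_left_eq)
    ultimately show "x (((m + i) mod n + n - i) mod n) * unit_root n ^ ((m + i) mod n * k)
        = unit_root n ^ (i * k) * (unit_root n ^ (k * m) * x m)"
      by (simp add: power_add[symmetric] algebra_simps)
  qed
  finally show ?thesis
    by (simp add: circ_eigenvalue_def sum_distrib_left)
qed

definition real_entries :: "nat \<Rightarrow> complex mat \<Rightarrow> bool" where
  "real_entries n H \<longleftrightarrow> (\<forall>i<n. \<forall>j<n. H $$ (i, j) \<in> \<real>)"

context
  fixes n :: nat
  assumes n_pos: "0 < n"
begin

lemma circulant_circ_of: "circulant_mat n (circ_of n x)"
  unfolding circulant_mat_def using n_pos by (simp add: circ_of_index circ_of_carrier)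

lemma Phi_circ_of: "Phi n (circ_of n x) = circ_of n (dft n x)"
  unfolding Phi_def
proof (rule circ_of_cong)
  fix k assume "k < n"
  then show "vec_index (fourier_mat n *\<^sub>v row (circ_of n x) 0) k = dft n x k"
    using n_pos fourier_mat_carrier[of n] circ_of_carrier[of n x]
    by (simp add: scalar_prod_def fourier_mat_index circ_of_index dft_def circ_eigenvalue_def
        sum_divide_distrib atLeast0LessThan mult.commute)
qed

lemma circ_of_mult_fourier_mat:
  "circ_of n x * fourier_mat n = fourier_mat n * diag_of n (circ_eigenvalue n x)"
proof (rule eq_matI)
  fix i k assume "i < dim_row (fourier_mat n * diag_of n (circ_eigenvalue n x))"
    "k < dim_col (fourier_mat n * diag_of n (circ_eigenvalue n x))"
  then have i: "i < n" and k: "k < n" by auto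
  have "(circ_of n x * fourier_mat n) $$ (i, k)
      = (\<Sum>j<n. x ((j + n - i) mod n) * unit_root n ^ (j * k)) / complex_of_real (sqrt (real n))"
    using i k
    by (simp add: scalar_prod_def circ_of_index fourier_mat_index sum_divide_distrib atLeast0LessThan)
  also have "\<dots> = (fourier_mat n * diag_of n (circ_eigenvalue n x)) $$ (i, k)"
    using i k
    by (simp add: sum_circ_row_mult_unit_root_power[OF n_pos i] scalar_prod_def fourier_mat_index
        diag_of_index atLeast0LessThan if_distrib cong: if_cong)
  finally show "(circ_of n x * fourier_mat n) $$ (i, k) = (fourier_mat n * diag_of n (circ_eigenvalue n x)) $$ (i, k)" .
qed simp_all

lemma in_sqrt_n_U_circ_of_iff: "in_sqrt_n_U n (circ_of n x) \<longleftrightarrow> (\<forall>k<n. cmod (dft n x k) = 1)"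
proof -
  have "in_sqrt_n_U n (circ_of n x)
      \<longleftrightarrow> (\<forall>k<n. circ_eigenvalue n x k * cnj (circ_eigenvalue n x k) = of_nat n)"
    unfolding in_sqrt_n_U_def
    by (simp only: circ_of_carrier simp_thms scaled_unitary_iff_eigenvalues[OF fourier_mat_carrier
        circ_of_carrier fourier_mat_mult_adjoint[OF n_pos] fourier_mat_adjoint_mult[OF n_pos]
        circ_of_mult_fourier_mat])
  then show ?thesis
    by (simp add: mult_cnj_eq_of_nat_iff[OF n_pos] dft_def)
qed

lemma self_adjoint_circ_of_iff:
  "self_adjoint_mat (circ_of n y) \<longleftrightarrow> (\<forall>k<n. cnj (y k) = y ((n - k) mod n))"
proof -
  have C: "circ_of n y \<in> carrier_mat n n" by (rule circ_of_carrier)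
  have reflect: "(n - (i + n - j) mod n) mod n = (j + n - i) mod n" if "i < n" "j < n" for i j
    using that by (cases "i < j") (simp add: mod_if; arith)+
  have "self_adjoint_mat (circ_of n y)
      \<longleftrightarrow> (\<forall>i<n. \<forall>j<n. cnj (y ((i + n - j) mod n)) = y ((j + n - i) mod n))"
    unfolding self_adjoint_mat_def using C mat_adjoint_carrier[OF C]
    by (auto simp: mat_eq_iff mat_adjoint_index[OF C] circ_of_index)
  also have "\<dots> \<longleftrightarrow> (\<forall>k<n. cnj (y k) = y ((n - k) mod n))"
  proof
    assume "\<forall>i<n. \<forall>j<n. cnj (y ((i + n - j) mod n)) = y ((j + n - i) mod n)"
    from this[rule_format, of _ 0] show "\<forall>k<n. cnj (y k) = y ((n - k) mod n)"
      using n_pos by simp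
  next
    assume "\<forall>k<n. cnj (y k) = y ((n - k) mod n)"
    then show "\<forall>i<n. \<forall>j<n. cnj (y ((i + n - j) mod n)) = y ((j + n - i) mod n)"
      using n_pos by (simp add: reflect)
  qed
  finally show ?thesis .
qed

lemma self_adjoint_Phi_circ_of_iff: "self_adjoint_mat (Phi n (circ_of n x)) \<longleftrightarrow> (\<forall>m<n. x m \<in> \<real>)"
  by (simp add: Phi_circ_of self_adjoint_circ_of_iff dft_hermitian_iff_real[OF n_pos])

lemma Phi_Phi_circ_of: "Phi n (Phi n (circ_of n x)) = circ_of n (\<lambda>k. x ((n - k) mod n))"
  by (simp add: Phi_circ_of dft_dft[OF n_pos] cong: circ_of_cong)

lemma funpow_4_Phi:
  assumes "circulant_mat n H"
  shows "(Phi n ^^ 4) H = H"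
proof -
  obtain x where H: "H = circ_of n x"
    using circulant_mat_eq_circ_of_row[OF assms] by blast
  have "(Phi n ^^ 4) H = Phi n (Phi n (Phi n (Phi n H)))"
    by (simp add: numeral_eq_Suc)
  also have "\<dots> = H"
    unfolding H Phi_Phi_circ_of by (rule circ_of_cong) (simp add: minus_mod_minus_mod)
  finally show ?thesis .
qed

lemma circ_of_in_C_circ_inf_iff:
  "circ_of n x \<in> C_circ_inf n \<longleftrightarrow> (\<forall>m<n. cmod (x m) = 1) \<and> (\<forall>k<n. cmod (dft n x k) = 1)"
  unfolding C_circ_inf_def complex_hadamard_def unimodular_entries_def
  by (simp add: circulant_circ_of circ_of_carrier in_sqrt_n_U_circ_of_iff
      all_entries_circ_of_iff[OF n_pos, of "\<lambda>z. cmod z = 1"])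

lemma Phi_in_C_circ_inf:
  assumes "H \<in> C_circ_inf n"
  shows "Phi n H \<in> C_circ_inf n"
proof -
  obtain x where H: "H = circ_of n x"
    using assms circulant_mat_eq_circ_of_row unfolding C_circ_inf_def by blast
  have "\<forall>k<n. cmod (dft n (dft n x) k) = 1"
    using assms n_pos by (simp add: H circ_of_in_C_circ_inf_iff dft_dft[OF n_pos])
  then show ?thesis
    using assms by (simp add: H Phi_circ_of circ_of_in_C_circ_inf_iff)
qed

lemma in_sqrt_n_U_iff_unimodular_Phi:
  assumes "circulant_mat n H"
  shows "in_sqrt_n_U n H \<longleftrightarrow> unimodular_entries n (Phi n H)"
proof -
  obtain x where H: "H = circ_of n x"
    using circulant_mat_eq_circ_of_row[OF assms] by blast
  show ?thesis
    unfolding H Phi_circ_of in_sqrt_n_U_circ_of_iff unimodular_entries_def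
    by (rule all_entries_circ_of_iff[OF n_pos, symmetric])
qed

lemma self_adjoint_Phi_iff_real_entries:
  assumes "circulant_mat n H"
  shows "self_adjoint_mat (Phi n H) \<longleftrightarrow> real_entries n H"
proof -
  obtain x where H: "H = circ_of n x"
    using circulant_mat_eq_circ_of_row[OF assms] by blast
  show ?thesis
    unfolding H self_adjoint_Phi_circ_of_iff real_entries_def
    by (rule all_entries_circ_of_iff[OF n_pos, symmetric])
qed

end

lemma in_sqrt_n_O_iff:
  assumes H: "H \<in> carrier_mat n n"
  shows "in_sqrt_n_O n H \<longleftrightarrow> in_sqrt_n_U n H \<and> real_entries n H"
proof -
  have "transpose_mat H = mat_adjoint H" if "real_entries n H"
    using that H mat_adjoint_carrier[OF H]
    by (intro eq_matI) (auto simp: real_entries_def mat_adjoint_index[OF H] Reals_cnj_iff)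
  then show ?thesis
    unfolding in_sqrt_n_O_def in_sqrt_n_U_def real_entries_def using H by auto
qed

lemma unimodular_in_Reals_iff: "cmod z = 1 \<Longrightarrow> z \<in> \<real> \<longleftrightarrow> z \<in> {1, -1}"
  by (auto elim!: Reals_cases simp: abs_if split: if_splits)

lemma C_circ_2_eq: "C_circ_2 n = {H \<in> C_circ_inf n. real_entries n H}"
  unfolding C_circ_2_def real_entries_def C_circ_inf_def complex_hadamard_def unimodular_entries_def
  using unimodular_in_Reals_iff by blast

lemma bij_betw_if_funpow_id:
  assumes "f ` A \<subseteq> A" and "\<And>x. x \<in> A \<Longrightarrow> (f ^^ Suc k) x = x"
  shows "bij_betw f A A"
proof -
  have "inj_on f A"
  proof (rule inj_onI)
    fix x y assume x: "x \<in> A" and y: "y \<in> A" and eq: "f x = f y"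
    have "x = (f ^^ k) (f x)"
      using assms(2)[OF x] by (simp only: funpow_Suc_right comp_apply)
    also have "\<dots> = y"
      using assms(2)[OF y] by (simp only: eq funpow_Suc_right comp_apply)
    finally show "x = y" .
  qed
  moreover have "A \<subseteq> f ` A"
  proof
    fix x assume x: "x \<in> A"
    have "(f ^^ k) x \<in> A"
      using x assms(1) by (induction k) auto
    moreover have "x = f ((f ^^ k) x)"
      using assms(2)[OF x] by simp
    ultimately show "x \<in> f ` A" by blast
  qed
  ultimately show ?thesis
    using assms(1) by (auto simp: bij_betw_def)
qed

lemma bij_betw_image_Collect:
  assumes "bij_betw f A A" and "\<And>x. x \<in> A \<Longrightarrow> Q (f x) \<longleftrightarrow> P x"
  shows "f ` {x \<in> A. P x} = {y \<in> A. Q y}"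
proof -
  have surj: "f ` A = A" using assms(1) by (rule bij_betw_imp_surj_on)
  show ?thesis
  proof
    show "f ` {x \<in> A. P x} \<subseteq> {y \<in> A. Q y}" using surj assms(2) by auto
    show "{y \<in> A. Q y} \<subseteq> f ` {x \<in> A. P x}"
    proof
      fix y assume y: "y \<in> {y \<in> A. Q y}"
      then obtain x where "x \<in> A" "y = f x" using surj by auto
      then show "y \<in> f ` {x \<in> A. P x}" using assms(2) y by auto
    qed
  qed
qed

theorem theorem3p2:
  fixes n :: nat
  assumes "n \<ge> 1"
  shows "bij_betw (Phi n) (C_circ_inf n) (C_circ_inf n)
    \<and> Phi n ` C_circ_2 n = C_circ_sa_inf n
    \<and> (\<forall>H. circulant_mat n H \<longrightarrow>
          (in_sqrt_n_U n H \<longleftrightarrow> unimodular_entries n (Phi n H))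
        \<and> (in_sqrt_n_O n H \<longleftrightarrow> self_adjoint_mat (Phi n H) \<and> unimodular_entries n (Phi n H)))"
proof -
  have n: "0 < n" using assms by simp
  have circulant: "circulant_mat n H" if "H \<in> C_circ_inf n" for H
    using that by (simp add: C_circ_inf_def)
  have bij: "bij_betw (Phi n) (C_circ_inf n) (C_circ_inf n)"
    by (rule bij_betw_if_funpow_id[where k = 3])
      (auto simp: Phi_in_C_circ_inf[OF n] funpow_4_Phi[OF n] circulant)
  have "Phi n ` C_circ_2 n = C_circ_sa_inf n"
    unfolding C_circ_2_eq C_circ_sa_inf_def
    by (rule bij_betw_image_Collect[OF bij]) (simp add: self_adjoint_Phi_iff_real_entries[OF n] circulant)
  moreover have "in_sqrt_n_O n H \<longleftrightarrow> self_adjoint_mat (Phi n H) \<and> unimodular_entries n (Phi n H)"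
    if "circulant_mat n H" for H
    using that in_sqrt_n_O_iff[of H n] unfolding circulant_mat_def
    by (auto simp: in_sqrt_n_U_iff_unimodular_Phi[OF n that] self_adjoint_Phi_iff_real_entries[OF n that])
  ultimately show ?thesis
    using bij in_sqrt_n_U_iff_unimodular_Phi[OF n] by blast
qed

end
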